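(* Let $k$ be a number field, $v$ an archimedean place of $k$, $\lambda$ a partition with $t\le n$ parts, and $g\in\mathrm{GL}_n(k)$, viewed in $\mathrm{GL}_n(k_v)$ via $v$. Then $$H_v\big(\pi_\lambda(g)e_{U(\lambda)}\big)=\Big(\Delta_{\lambda^*_1}(g^*g)\,\Delta_{\lambda^*_2}(g^*g)\cdots\Delta_{\lambda^*_s}(g^*g)\Big)^{d_v/2}\,H_v\big(e_{U(\lambda)}\big),$$ where $g^*$ is the transpose of $g$ if $k_v=\mathbb{R}$ and its conjugate transpose if $k_v=\mathbb{C}$, and $\Delta_\ell$ denotes the leading principal $\ell\times\ell$ minor.
   Context: $k_v$ is the completion of $k$ at $v$ ($\mathbb{R}$ or $\mathbb{C}$) and $d_v=[k_v:\mathbb{R}]$. A partition $\lambda=(\lambda_1\ge\dots\ge\lambda_t>0)$ has $s=\lambda_1$ columns of heights $\lambda^*_\ell=\#\{i:\lambda_i\ge\ell\}$. Let $Z=(z_{a,i})_{1\le a\le t,1\le i\le n}$ be indeterminates. For $y_1,\dots,y_p\in k_v^n$ let $\Delta(y_1,\dots,y_p)=\det((Zy_b)_a)_{1\le a,b\le p}$, $(Zy)_a=\sum_i z_{a,i}(y)_i$; for a family $Y=(y_{\ell,b})_{1\le\ell\le s,1\le b\le\lambda^*_\ell}$ put $\phi_Y=\prod_\ell\Delta(y_{\ell,1},\dots,y_{\ell,\lambda^*_\ell})$. The Schur module $\mathbb{S}^\lambda(k_v^n)$ is the span of the $\phi_Y$ in $k_v[Z]$, with action $(\pi_\lambda(g)P)(Z)=P(Zg)$.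 The highest weight vector is $e_{U(\lambda)}=\prod_{\ell=1}^s\det(z_{a,b})_{1\le a,b\le\lambda^*_\ell}$. On $k_v[Z]$ consider the inner product (Hermitian if $k_v=\mathbb{C}$) making distinct monomials orthogonal with $\langle\prod z_{a,i}^{\alpha_{a,i}},\prod z_{a,i}^{\alpha_{a,i}}\rangle=\prod\alpha_{a,i}!$, and set $H_v(X)=\frac{\dim\mathbb{S}^\lambda(k^n)}{n!}\langle X,X\rangle^{d_v/2}$ for $X\in\mathbb{S}^\lambda(k_v^n)$. *)

theory Defs
  imports "HOL-Analysis.Analysis" "HOL-Library.Poly_Mapping" "HOL-Combinatorics.Permutations"
begin

section \<open>Number fields embedded in C (the archimedean place v)\<close>

definition is_number_field :: "complex set \<Rightarrow> bool" where
  "is_number_field K \<longleftrightarrow>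
     0 \<in> K \<and> 1 \<in> K \<and>
     (\<forall>x\<in>K. \<forall>y\<in>K. x + y \<in> K \<and> x - y \<in> K \<and> x * y \<in> K) \<and>
     (\<forall>x\<in>K. inverse x \<in> K) \<and>
     (\<exists>B. finite B \<and> B \<subseteq> K \<and> (\<forall>x\<in>K. \<exists>c. x = (\<Sum>b\<in>B. of_rat (c b) * b)))"

text \<open>For the place v given by the embedding K \<subseteq> C: k_v = R iff K \<subseteq> R, d_v = [k_v : R].\<close>
definition place_degree :: "complex set \<Rightarrow> nat" where
  "place_degree K = (if K \<subseteq> \<real> then 1 else 2)"

section \<open>Polynomials in the indeterminates z_{a,i} (0-based indices)\<close>

type_synonym cpoly = "((nat \<times> nat) \<Rightarrow>\<^sub>0 nat) \<Rightarrow>\<^sub>0 complex"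

definition Var :: "nat \<Rightarrow> nat \<Rightarrow> cpoly" where
  "Var a i = Poly_Mapping.single (Poly_Mapping.single (a, i) 1) 1"

definition Const :: "complex \<Rightarrow> cpoly" where
  "Const c = Poly_Mapping.single 0 c"

definition ldet :: "nat \<Rightarrow> (nat \<Rightarrow> nat \<Rightarrow> 'r::comm_ring_1) \<Rightarrow> 'r" where
  "ldet p M = (\<Sum>\<sigma> \<in> {\<sigma>. \<sigma> permutes {0..<p}}. of_int (sign \<sigma>) * (\<Prod>a<p. M a (\<sigma> a)))"

definition subst :: "(nat \<times> nat \<Rightarrow> cpoly) \<Rightarrow> cpoly \<Rightarrow> cpoly" where
  "subst \<tau> P = sum (\<lambda>\<alpha>. Const (Poly_Mapping.lookup P \<alpha>) * prod (\<lambda>x. \<tau> x ^ Poly_Mapping.lookup \<alpha> x) (Poly_Mapping.keys \<alpha>)) (Poly_Mapping.keys P)"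

text \<open>(\<pi>(g) P)(Z) = P(Z g), g an n x n matrix.\<close>
definition pi_act :: "nat \<Rightarrow> (nat \<Rightarrow> nat \<Rightarrow> complex) \<Rightarrow> cpoly \<Rightarrow> cpoly" where
  "pi_act n g P = subst (\<lambda>(a, j). \<Sum>i<n. Var a i * Const (g i j)) P"

text \<open>Inner product: distinct monomials orthogonal, <z^\<alpha>, z^\<alpha>> = \<Prod> \<alpha>_{a,i}!.\<close>
definition norm_sq :: "cpoly \<Rightarrow> real" where
  "norm_sq P = sum (\<lambda>\<alpha>. (cmod (Poly_Mapping.lookup P \<alpha>))\<^sup>2 * prod (\<lambda>x. fact (Poly_Mapping.lookup \<alpha> x)) (Poly_Mapping.keys \<alpha>)) (Poly_Mapping.keys P)"

text \<open>A partition \<lambda> = (\<lambda>_1 \<ge> ... \<ge> \<lambda>_t > 0) as a list; t = length.\<close>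
definition is_partition :: "nat list \<Rightarrow> bool" where
  "is_partition lam \<longleftrightarrow> sorted_wrt (\<ge>) lam \<and> (\<forall>x\<in>set lam. 0 < x)"

definition ncols :: "nat list \<Rightarrow> nat" where
  "ncols lam = (if lam = [] then 0 else hd lam)"

definition colh :: "nat list \<Rightarrow> nat \<Rightarrow> nat" where
  "colh lam l = card {i. i < length lam \<and> l \<le> lam ! i}"

definition Zvec :: "nat \<Rightarrow> (nat \<Rightarrow> complex) \<Rightarrow> nat \<Rightarrow> cpoly" where
  "Zvec n y a = (\<Sum>i<n. Var a i * Const (y i))"

definition Delta :: "nat \<Rightarrow> nat \<Rightarrow> (nat \<Rightarrow> nat \<Rightarrow> complex) \<Rightarrow> cpoly" where
  "Delta n p y = ldet p (\<lambda>a b. Zvec n (y b) a)"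

text \<open>\<phi>_Y for Y = (y_{l,b}), y_{l,b} \<in> C^n (vectors = functions on {0..<n}).\<close>
definition phiY :: "nat \<Rightarrow> nat list \<Rightarrow> (nat \<Rightarrow> nat \<Rightarrow> nat \<Rightarrow> complex) \<Rightarrow> cpoly" where
  "phiY n lam Y = (\<Prod>l\<in>{1..ncols lam}. Delta n (colh lam l) (Y l))"

definition schur_gens :: "nat \<Rightarrow> nat list \<Rightarrow> cpoly set" where
  "schur_gens n lam = {phiY n lam Y | Y. True}"

definition cscale :: "complex \<Rightarrow> cpoly \<Rightarrow> cpoly" where
  "cscale c P = Const c * P"

text \<open>dim S^\<lambda>(k^n): dimension of the span of the \<phi>_Y (computed over C; the dimension
  of the Schur module does not depend on the field of characteristic 0).\<close>
definition schur_dim :: "nat \<Rightarrow> nat list \<Rightarrow> nat" where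
  "schur_dim n lam = vector_space.dim cscale (schur_gens n lam)"

definition e_U :: "nat list \<Rightarrow> cpoly" where
  "e_U lam = (\<Prod>l\<in>{1..ncols lam}. ldet (colh lam l) (\<lambda>a b. Var a b))"

definition H_v :: "nat \<Rightarrow> nat list \<Rightarrow> nat \<Rightarrow> cpoly \<Rightarrow> real" where
  "H_v n lam d X = real (schur_dim n lam) / fact n * norm_sq X powr (real d / 2)"

text \<open>g^* g (conjugate transpose; equals transpose for real g), and leading minors.\<close>
definition gstar_g :: "nat \<Rightarrow> (nat \<Rightarrow> nat \<Rightarrow> complex) \<Rightarrow> nat \<Rightarrow> nat \<Rightarrow> complex" where
  "gstar_g n g i j = (\<Sum>k<n. cnj (g k i) * g k j)"

definition lead_minor :: "nat \<Rightarrow> (nat \<Rightarrow> nat \<Rightarrow> complex) \<Rightarrow> complex" where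
  "lead_minor l M = ldet l M"

end

theory Submission
  imports Defs "Jordan_Normal_Form.Determinant"
begin

text \<open>Gram--Schmidt writes the invertible \<open>g\<close> as \<open>g = Q R\<close> with \<open>Q\<close> unitary and \<open>R\<close> upper
  triangular. The leading \<open>p \<times> p\<close> block of \<open>Z Q R\<close> is that of \<open>Z Q\<close> times the leading block of
  \<open>R\<close>, so \<open>\<pi>(g) e\<^sub>U\<close> is \<open>\<pi>(Q) e\<^sub>U\<close> times the product of the leading minors of \<open>R\<close> of
  sizes \<open>\<lambda>\<^sup>*\<^sub>1, \<dots>, \<lambda>\<^sup>*\<^sub>s\<close>, while \<open>\<Delta>\<^sub>p(g\<^sup>* g) = \<Delta>\<^sub>p(R\<^sup>* R) = |det R\<^sub>p|\<^sup>2\<close>.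
  It remains to see that \<open>\<pi>(Q)\<close> preserves the norm. The inner product is the Fischer inner
  product, for which \<open>\<partial>\<^sub>x\<close> is adjoint to multiplication by \<open>z\<^sub>x\<close>; hence the Euler identity
  \<open>\<Sum>\<^sub>x \<langle>\<partial>\<^sub>x P, \<partial>\<^sub>x Q\<rangle> = m \<langle>P, Q\<rangle>\<close> for forms of degree \<open>m\<close>. Together with the chain rule for a
  unitary linear substitution this reduces invariance in degree \<open>m\<close> to degree \<open>m - 1\<close>.\<close>

abbreviation lookup :: "('a \<Rightarrow>\<^sub>0 'b::zero) \<Rightarrow> 'a \<Rightarrow> 'b" where
  "lookup \<equiv> Poly_Mapping.lookup"
abbreviation keys :: "('a \<Rightarrow>\<^sub>0 'b::zero) \<Rightarrow> 'a set" where
  "keys \<equiv> Poly_Mapping.keys"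
abbreviation single :: "'a \<Rightarrow> 'b \<Rightarrow> ('a \<Rightarrow>\<^sub>0 'b::zero)" where
  "single \<equiv> Poly_Mapping.single"

type_synonym monomial = "(nat \<times> nat) \<Rightarrow>\<^sub>0 nat"

section \<open>Polynomials and substitution\<close>

lemma Const_add: "Const (a + b) = Const a + Const b"
  by (simp add: Const_def single_add)

lemma Const_mult: "Const (a * b) = Const a * Const b"
  by (simp add: Const_def mult_single)

lemma Const_0 [simp]: "Const 0 = 0"
  by (simp add: Const_def)

lemma Const_1 [simp]: "Const 1 = 1"
  by (simp add: Const_def)

lemma Const_sum: "Const (sum f A) = (\<Sum>x\<in>A. Const (f x))"
  by (induct A rule: infinite_finite_induct) (simp_all add: Const_add)

lemma Const_prod: "Const (prod f A) = (\<Prod>x\<in>A. Const (f x))"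
  by (induct A rule: infinite_finite_induct) (simp_all add: Const_mult)

lemma Const_of_int: "Const (of_int k) = of_int k"
  by (simp add: Const_def)

lemma lookup_sum_single:
  "finite A \<Longrightarrow> lookup (\<Sum>\<alpha>\<in>A. single \<alpha> (f \<alpha>)) \<beta> = (if \<beta> \<in> A then f \<beta> else 0)"
  by (simp add: lookup_sum lookup_single when_def)

lemma poly_mapping_sum_single: "P = (\<Sum>\<alpha>\<in>keys P. single \<alpha> (lookup P \<alpha>))"
  by (rule poly_mapping_eqI) (simp add: lookup_sum_single in_keys_iff)

lemma sum_keys_mono_neutral:
  assumes "finite S" "keys P \<subseteq> S" "\<And>\<alpha>. f \<alpha> 0 = 0"
  shows "(\<Sum>\<alpha>\<in>keys P. f \<alpha> (lookup P \<alpha>)) = (\<Sum>\<alpha>\<in>S. f \<alpha> (lookup P \<alpha>))"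
  using assms by (intro sum.mono_neutral_left) (auto simp: in_keys_iff)

lemma keys_add_nat: "keys ((\<alpha>::'a \<Rightarrow>\<^sub>0 nat) + \<beta>) = keys \<alpha> \<union> keys \<beta>"
  by (auto simp: in_keys_iff lookup_add)

lemma times_poly_mapping_sum_single:
  "P * Q = (\<Sum>\<alpha>\<in>keys P. \<Sum>\<beta>\<in>keys Q. single (\<alpha> + \<beta>) (lookup P \<alpha> * lookup Q \<beta>))"
  by (subst (1) poly_mapping_sum_single[of P], subst (1) poly_mapping_sum_single[of Q])
     (simp add: sum_product mult_single)

lemma lookup_Const_mult: "lookup (Const c * P) \<alpha> = c * lookup P \<alpha>"
proof -
  have "Const c * P = (\<Sum>\<beta>\<in>keys P. single \<beta> (c * lookup P \<beta>))"
    by (subst (1) poly_mapping_sum_single[of P]) (simp add: sum_distrib_left Const_def mult_single)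
  then show ?thesis
    by (simp add: lookup_sum_single in_keys_iff)
qed

lemma keys_Const_mult: "keys (Const c * P) \<subseteq> keys P"
  by (auto simp: in_keys_iff lookup_Const_mult)

definition eval_monomial :: "(nat \<times> nat \<Rightarrow> cpoly) \<Rightarrow> monomial \<Rightarrow> cpoly" where
  "eval_monomial \<tau> \<alpha> = (\<Prod>x\<in>keys \<alpha>. \<tau> x ^ lookup \<alpha> x)"

lemma eval_monomial_mono_neutral:
  "finite S \<Longrightarrow> keys \<alpha> \<subseteq> S \<Longrightarrow> eval_monomial \<tau> \<alpha> = (\<Prod>x\<in>S. \<tau> x ^ lookup \<alpha> x)"
  unfolding eval_monomial_def by (intro prod.mono_neutral_left) (auto simp: in_keys_iff)

lemma eval_monomial_add: "eval_monomial \<tau> (\<alpha> + \<beta>) = eval_monomial \<tau> \<alpha> * eval_monomial \<tau> \<beta>"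
proof -
  let ?S = "keys \<alpha> \<union> keys \<beta>"
  have "eval_monomial \<tau> (\<alpha> + \<beta>) = (\<Prod>x\<in>?S. \<tau> x ^ lookup \<alpha> x) * (\<Prod>x\<in>?S. \<tau> x ^ lookup \<beta> x)"
    by (subst eval_monomial_mono_neutral[where S = ?S])
       (auto simp: keys_add_nat lookup_add power_add prod.distrib)
  then show ?thesis
    by (subst (1 2) eval_monomial_mono_neutral[where S = ?S]) auto
qed

lemma eval_monomial_0 [simp]: "eval_monomial \<tau> 0 = 1"
  by (simp add: eval_monomial_def)

lemma eval_monomial_Var: "eval_monomial (\<lambda>x. Var (fst x) (snd x)) \<alpha> = single \<alpha> 1"
proof -
  have pow: "single (single x 1) (1::complex) ^ k = single (single x k) 1" for x k
    by (induct k) (simp_all add: mult_single single_add[symmetric])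
  have "eval_monomial (\<lambda>x. Var (fst x) (snd x)) \<alpha> = (\<Prod>x\<in>keys \<alpha>. single (single x (lookup \<alpha> x)) 1)"
    unfolding eval_monomial_def Var_def by (simp only: prod.collapse pow)
  also have "\<dots> = single (\<Sum>x\<in>keys \<alpha>. single x (lookup \<alpha> x)) 1"
    by (induct rule: finite_induct[OF finite_keys]) (simp_all add: mult_single)
  also have "\<dots> = single \<alpha> 1"
    using poly_mapping_sum_single[of \<alpha>] by simp
  finally show ?thesis .
qed

lemma subst_eq_sum_keys: "subst \<tau> P = (\<Sum>\<alpha>\<in>keys P. Const (lookup P \<alpha>) * eval_monomial \<tau> \<alpha>)"
  by (simp add: subst_def eval_monomial_def)

lemma subst_mono_neutral:
  "finite S \<Longrightarrow> keys P \<subseteq> S \<Longrightarrow> subst \<tau> P = (\<Sum>\<alpha>\<in>S. Const (lookup P \<alpha>) * eval_monomial \<tau> \<alpha>)"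
  unfolding subst_eq_sum_keys by (rule sum_keys_mono_neutral) simp_all

lemma subst_add: "subst \<tau> (P + Q) = subst \<tau> P + subst \<tau> Q"
  by (subst (1 2 3) subst_mono_neutral[where S = "keys P \<union> keys Q"])
     (auto simp: keys_add lookup_add Const_add distrib_right sum.distrib)

lemma subst_0 [simp]: "subst \<tau> 0 = 0"
  by (simp add: subst_def)

lemma subst_sum: "subst \<tau> (sum f A) = (\<Sum>x\<in>A. subst \<tau> (f x))"
  by (induct A rule: infinite_finite_induct) (simp_all add: subst_add)

lemma subst_single: "subst \<tau> (single \<alpha> c) = Const c * eval_monomial \<tau> \<alpha>"
  by (simp add: subst_eq_sum_keys)

lemma subst_mult: "subst \<tau> (P * Q) = subst \<tau> P * subst \<tau> Q"
proof -
  have "subst \<tau> (P * Q) = (\<Sum>\<alpha>\<in>keys P. \<Sum>\<beta>\<in>keys Q.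
      (Const (lookup P \<alpha>) * eval_monomial \<tau> \<alpha>) * (Const (lookup Q \<beta>) * eval_monomial \<tau> \<beta>))"
    by (subst times_poly_mapping_sum_single)
       (simp add: subst_sum subst_single eval_monomial_add Const_mult ac_simps)
  then show ?thesis
    by (simp add: subst_eq_sum_keys sum_product)
qed

lemma subst_Const [simp]: "subst \<tau> (Const c) = Const c"
  by (simp add: Const_def subst_single)

lemma subst_1 [simp]: "subst \<tau> 1 = 1"
  using subst_Const[of \<tau> 1] by simp

lemma subst_prod: "subst \<tau> (prod f A) = (\<Prod>x\<in>A. subst \<tau> (f x))"
  by (induct A rule: infinite_finite_induct) (simp_all add: subst_mult)

lemma subst_Var [simp]: "subst \<tau> (Var a i) = \<tau> (a, i)"
  by (simp add: Var_def subst_single eval_monomial_def)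

lemma subst_ldet: "subst \<tau> (ldet p M) = ldet p (\<lambda>a b. subst \<tau> (M a b))"
  by (simp add: ldet_def subst_sum subst_mult subst_prod subst_Const[of _ "of_int _", unfolded Const_of_int])

section \<open>Partial derivatives\<close>

definition mvar :: "nat \<times> nat \<Rightarrow> monomial" where
  "mvar x = single x 1"

lemma lookup_mvar: "lookup (mvar x) y = (if x = y then 1 else 0)"
  by (simp add: mvar_def lookup_single when_def)

text \<open>When \<open>z\<^sub>x\<close> does not occur in \<open>\<alpha>\<close> the coefficient vanishes, so the truncated
  subtraction \<open>\<alpha> - mvar x\<close> is harmless.\<close>
definition partial_deriv :: "nat \<times> nat \<Rightarrow> cpoly \<Rightarrow> cpoly" where
  "partial_deriv x P = (\<Sum>\<alpha>\<in>keys P. single (\<alpha> - mvar x) (of_nat (lookup \<alpha> x) * lookup P \<alpha>))"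

lemma lookup_minus_mvar: "lookup ((\<alpha>::monomial) - mvar x) y = lookup \<alpha> y - (if x = y then 1 else 0)"
  by (simp add: lookup_minus lookup_mvar)

lemma keys_minus_mvar: "keys ((\<alpha>::monomial) - mvar x) \<subseteq> keys \<alpha>"
  by (auto simp: in_keys_iff lookup_minus_mvar split: if_splits)

lemma minus_mvar_plus_mvar: "1 \<le> lookup (\<alpha>::monomial) x \<Longrightarrow> (\<alpha> - mvar x) + mvar x = \<alpha>"
  by (rule poly_mapping_eqI) (auto simp: lookup_add lookup_minus_mvar lookup_mvar)

lemma minus_mvar_add: "1 \<le> lookup (\<alpha>::monomial) x \<Longrightarrow> (\<alpha> - mvar x) + \<beta> = \<alpha> + \<beta> - mvar x"
  by (rule poly_mapping_eqI) (auto simp: lookup_add lookup_minus_mvar)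

lemma add_minus_mvar: "1 \<le> lookup (\<beta>::monomial) x \<Longrightarrow> \<alpha> + (\<beta> - mvar x) = \<alpha> + \<beta> - mvar x"
  by (rule poly_mapping_eqI) (auto simp: lookup_add lookup_minus_mvar)

lemma partial_deriv_mono_neutral:
  "finite S \<Longrightarrow> keys P \<subseteq> S \<Longrightarrow>
   partial_deriv x P = (\<Sum>\<alpha>\<in>S. single (\<alpha> - mvar x) (of_nat (lookup \<alpha> x) * lookup P \<alpha>))"
  unfolding partial_deriv_def by (rule sum_keys_mono_neutral) simp_all

lemma partial_deriv_add: "partial_deriv x (P + Q) = partial_deriv x P + partial_deriv x Q"
  by (subst (1 2 3) partial_deriv_mono_neutral[where S = "keys P \<union> keys Q"])
     (auto simp: keys_add lookup_add distrib_left single_add sum.distrib)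

lemma partial_deriv_0 [simp]: "partial_deriv x 0 = 0"
  by (simp add: partial_deriv_def)

lemma partial_deriv_sum: "partial_deriv x (sum f A) = (\<Sum>i\<in>A. partial_deriv x (f i))"
  by (induct A rule: infinite_finite_induct) (simp_all add: partial_deriv_add)

lemma partial_deriv_single: "partial_deriv x (single \<alpha> c) = single (\<alpha> - mvar x) (of_nat (lookup \<alpha> x) * c)"
  by (simp add: partial_deriv_def)

lemma partial_deriv_eq_sum_single: "partial_deriv x P = (\<Sum>\<alpha>\<in>keys P. partial_deriv x (single \<alpha> (lookup P \<alpha>)))"
  by (simp only: partial_deriv_single) (simp only: partial_deriv_def)

lemma partial_deriv_single_add:
  "partial_deriv x (single (\<alpha> + \<beta>) c) =
   single (\<alpha> - mvar x + \<beta>) (of_nat (lookup \<alpha> x) * c) +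
   single (\<alpha> + (\<beta> - mvar x)) (of_nat (lookup \<beta> x) * c)"
proof (cases "lookup \<alpha> x = 0"; cases "lookup \<beta> x = 0")
  assume "lookup \<alpha> x \<noteq> 0" "lookup \<beta> x \<noteq> 0"
  then show ?thesis
    by (simp add: partial_deriv_single lookup_add minus_mvar_add add_minus_mvar
        single_add[symmetric] distrib_right)
qed (simp_all add: partial_deriv_single lookup_add minus_mvar_add add_minus_mvar)

lemma partial_deriv_mult: "partial_deriv x (P * Q) = partial_deriv x P * Q + P * partial_deriv x Q"
proof -
  have l: "partial_deriv x (P * Q) = (\<Sum>\<alpha>\<in>keys P. \<Sum>\<beta>\<in>keys Q.
      single (\<alpha> - mvar x + \<beta>) (of_nat (lookup \<alpha> x) * (lookup P \<alpha> * lookup Q \<beta>)) +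
      single (\<alpha> + (\<beta> - mvar x)) (of_nat (lookup \<beta> x) * (lookup P \<alpha> * lookup Q \<beta>)))"
    by (subst times_poly_mapping_sum_single) (simp add: partial_deriv_sum partial_deriv_single_add)
  have "partial_deriv x P * Q = partial_deriv x P * (\<Sum>\<beta>\<in>keys Q. single \<beta> (lookup Q \<beta>))"
    by (simp flip: poly_mapping_sum_single)
  then have r1: "partial_deriv x P * Q = (\<Sum>\<alpha>\<in>keys P. \<Sum>\<beta>\<in>keys Q.
      single (\<alpha> - mvar x + \<beta>) (of_nat (lookup \<alpha> x) * (lookup P \<alpha> * lookup Q \<beta>)))"
    by (simp add: partial_deriv_def sum_product mult_single mult.assoc mult.left_commute)
  have "P * partial_deriv x Q = (\<Sum>\<alpha>\<in>keys P. single \<alpha> (lookup P \<alpha>)) * partial_deriv x Q"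
    by (simp flip: poly_mapping_sum_single)
  then have r2: "P * partial_deriv x Q = (\<Sum>\<alpha>\<in>keys P. \<Sum>\<beta>\<in>keys Q.
      single (\<alpha> + (\<beta> - mvar x)) (of_nat (lookup \<beta> x) * (lookup P \<alpha> * lookup Q \<beta>)))"
    by (simp add: partial_deriv_def sum_product mult_single mult.assoc mult.left_commute)
  show ?thesis
    unfolding l r1 r2 by (simp add: sum.distrib)
qed

lemma partial_deriv_Const [simp]: "partial_deriv x (Const c) = 0"
  by (simp add: Const_def partial_deriv_single)

lemma partial_deriv_Const_mult: "partial_deriv x (Const c * P) = Const c * partial_deriv x P"
  by (simp add: partial_deriv_mult)

lemma partial_deriv_Var: "partial_deriv y (Var a i) = Const (if y = (a, i) then 1 else 0)"
  by (auto simp: Var_def Const_def partial_deriv_single lookup_single when_def mvar_def)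

section \<open>Variables and homogeneity\<close>

definition vars :: "cpoly \<Rightarrow> (nat \<times> nat) set" where
  "vars P = \<Union> (keys ` keys P)"

lemma vars_add: "vars (P + Q) \<subseteq> vars P \<union> vars Q"
  unfolding vars_def using keys_add[of P Q] by blast

lemma vars_mult: "vars (P * Q) \<subseteq> vars P \<union> vars Q"
  unfolding vars_def using keys_mult[of P Q] by (force simp: keys_add_nat)

lemma vars_Const [simp]: "vars (Const c) = {}"
  by (simp add: vars_def Const_def)

lemma vars_Var: "vars (Var a i) = {(a, i)}"
  by (simp add: vars_def Var_def)

lemma vars_Const_mult: "vars (Const c * P) \<subseteq> vars P"
  using vars_mult[of "Const c" P] by simp

lemma vars_sum: "(\<And>i. i \<in> A \<Longrightarrow> vars (f i) \<subseteq> Y) \<Longrightarrow> vars (sum f A) \<subseteq> Y"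
proof (induct A rule: infinite_finite_induct)
  case (insert x F)
  then show ?case using vars_add[of "f x" "sum f F"] by auto
qed (auto simp: vars_def)

lemma vars_prod: "(\<And>i. i \<in> A \<Longrightarrow> vars (f i) \<subseteq> Y) \<Longrightarrow> vars (prod f A) \<subseteq> Y"
proof (induct A rule: infinite_finite_induct)
  case (insert x F)
  then show ?case using vars_mult[of "f x" "prod f F"] by auto
qed (auto simp: vars_def)

lemma vars_power: "vars P \<subseteq> Y \<Longrightarrow> vars (P ^ k) \<subseteq> Y"
proof (induct k)
  case (Suc k)
  then show ?case using vars_mult[of P "P ^ k"] by auto
qed (auto simp: vars_def)

lemma vars_subst:
  assumes "\<And>x. x \<in> vars P \<Longrightarrow> vars (\<tau> x) \<subseteq> Y"
  shows "vars (subst \<tau> P) \<subseteq> Y"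
  unfolding subst_eq_sum_keys eval_monomial_def
  by (intro vars_sum order.trans[OF vars_Const_mult] vars_prod vars_power assms)
     (auto simp: vars_def)

lemma vars_partial_deriv: "vars (partial_deriv x P) \<subseteq> vars P"
  unfolding partial_deriv_def
proof (rule vars_sum)
  fix \<alpha> assume "\<alpha> \<in> keys P"
  then show "vars (single (\<alpha> - mvar x) (of_nat (lookup \<alpha> x) * lookup P \<alpha>)) \<subseteq> vars P"
    using keys_minus_mvar[of \<alpha> x] by (auto simp: vars_def)
qed

definition mon_degree :: "monomial \<Rightarrow> nat" where
  "mon_degree \<alpha> = (\<Sum>x\<in>keys \<alpha>. lookup \<alpha> x)"

lemma mon_degree_mono_neutral: "finite S \<Longrightarrow> keys \<alpha> \<subseteq> S \<Longrightarrow> mon_degree \<alpha> = (\<Sum>x\<in>S. lookup \<alpha> x)"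
  unfolding mon_degree_def by (intro sum.mono_neutral_left) (auto simp: in_keys_iff)

lemma mon_degree_add: "mon_degree (\<alpha> + \<beta>) = mon_degree \<alpha> + mon_degree \<beta>"
  by (subst (1 2 3) mon_degree_mono_neutral[where S = "keys \<alpha> \<union> keys \<beta>"])
     (auto simp: keys_add_nat lookup_add sum.distrib)

lemma mon_degree_mvar: "mon_degree (mvar x) = 1"
  by (simp add: mon_degree_def mvar_def)

lemma mon_degree_eq_0_iff: "mon_degree \<alpha> = 0 \<longleftrightarrow> \<alpha> = 0"
  by (auto simp: mon_degree_def in_keys_iff simp flip: keys_eq_empty)

definition homogeneous :: "nat \<Rightarrow> cpoly \<Rightarrow> bool" where
  "homogeneous m P \<longleftrightarrow> (\<forall>\<alpha>\<in>keys P. mon_degree \<alpha> = m)"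

lemma homogeneous_add: "homogeneous m P \<Longrightarrow> homogeneous m Q \<Longrightarrow> homogeneous m (P + Q)"
  unfolding homogeneous_def using keys_add[of P Q] by blast

lemma homogeneous_0 [simp]: "homogeneous m 0"
  by (simp add: homogeneous_def)

lemma homogeneous_sum: "(\<And>i. i \<in> A \<Longrightarrow> homogeneous m (f i)) \<Longrightarrow> homogeneous m (sum f A)"
  by (induct A rule: infinite_finite_induct) (auto intro: homogeneous_add)

lemma homogeneous_mult: "homogeneous a P \<Longrightarrow> homogeneous b Q \<Longrightarrow> homogeneous (a + b) (P * Q)"
  unfolding homogeneous_def using keys_mult[of P Q] by (force simp: mon_degree_add)

lemma homogeneous_Const: "homogeneous 0 (Const c)"
  by (simp add: homogeneous_def Const_def mon_degree_def)

lemma homogeneous_Const_mult: "homogeneous m P \<Longrightarrow> homogeneous m (Const c * P)"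
  using homogeneous_mult[OF homogeneous_Const] by fastforce

lemma homogeneous_prod:
  "(\<And>i. i \<in> A \<Longrightarrow> homogeneous (m i) (f i)) \<Longrightarrow> homogeneous (\<Sum>i\<in>A. m i) (prod f A)"
proof (induct A rule: infinite_finite_induct)
  case (insert x F)
  then show ?case by (auto intro: homogeneous_mult)
qed (use homogeneous_Const[of 1] in simp_all)

lemma homogeneous_power: "homogeneous m P \<Longrightarrow> homogeneous (k * m) (P ^ k)"
proof (induct k)
  case (Suc k)
  then show ?case using homogeneous_mult[of m P "k * m" "P ^ k"] by simp
qed (use homogeneous_Const[of 1] in simp)

lemma homogeneous_Var: "homogeneous 1 (Var a i)"
  by (simp add: homogeneous_def Var_def mon_degree_def)

lemma homogeneous_subst:
  assumes "\<And>x. x \<in> vars P \<Longrightarrow> homogeneous 1 (\<tau> x)" and "homogeneous m P"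
  shows "homogeneous m (subst \<tau> P)"
  unfolding subst_eq_sum_keys
proof (intro homogeneous_sum homogeneous_Const_mult)
  fix \<alpha> assume \<alpha>: "\<alpha> \<in> keys P"
  have "homogeneous (\<Sum>x\<in>keys \<alpha>. lookup \<alpha> x * 1) (eval_monomial \<tau> \<alpha>)"
    unfolding eval_monomial_def
    by (intro homogeneous_prod homogeneous_power assms(1)) (use \<alpha> in \<open>auto simp: vars_def\<close>)
  then show "homogeneous m (eval_monomial \<tau> \<alpha>)"
    using assms(2) \<alpha> by (simp add: homogeneous_def mon_degree_def)
qed

lemma homogeneous_partial_deriv: "homogeneous (Suc m) P \<Longrightarrow> homogeneous m (partial_deriv x P)"
  unfolding partial_deriv_def
proof (intro homogeneous_sum)
  fix \<alpha> assume "homogeneous (Suc m) P" and "\<alpha> \<in> keys P"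
  then have "mon_degree \<alpha> = Suc m"
    by (simp add: homogeneous_def)
  moreover have "mon_degree \<alpha> = mon_degree (\<alpha> - mvar x) + 1" if "lookup \<alpha> x \<noteq> 0"
    using that minus_mvar_plus_mvar[of \<alpha> x] mon_degree_add[of "\<alpha> - mvar x" "mvar x"]
    by (simp add: mon_degree_mvar)
  ultimately show "homogeneous m (single (\<alpha> - mvar x) (of_nat (lookup \<alpha> x) * lookup P \<alpha>))"
    by (auto simp: homogeneous_def)
qed

lemma homogeneous_0_eq_Const: "homogeneous 0 P \<Longrightarrow> P = Const (lookup P 0)"
  by (rule poly_mapping_eqI)
     (auto simp: homogeneous_def mon_degree_eq_0_iff Const_def lookup_single when_def in_keys_iff)

lemma poly_induct_vars [consumes 1, case_names Const Var add mult]: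
  assumes "vars P \<subseteq> X"
    and Const: "\<And>c. \<Phi> (Const c)"
    and Var: "\<And>a i. (a, i) \<in> X \<Longrightarrow> \<Phi> (Var a i)"
    and add: "\<And>A B. \<Phi> A \<Longrightarrow> \<Phi> B \<Longrightarrow> \<Phi> (A + B)"
    and mult: "\<And>A B. \<Phi> A \<Longrightarrow> \<Phi> B \<Longrightarrow> \<Phi> (A * B)"
  shows "\<Phi> P"
proof -
  have sum: "\<Phi> (sum f S)" if "\<And>i. i \<in> S \<Longrightarrow> \<Phi> (f i)" for f and S :: "'b set"
    using that by (induct S rule: infinite_finite_induct) (auto intro: add Const[of 0, simplified])
  have prod: "\<Phi> (prod f S)" if "\<And>i. i \<in> S \<Longrightarrow> \<Phi> (f i)" for f and S :: "'b set"
    using that by (induct S rule: infinite_finite_induct) (auto intro: mult Const[of 1, simplified])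
  have power: "\<Phi> (B ^ k)" if "\<Phi> B" for B k
    using that by (induct k) (auto intro: mult Const[of 1, simplified])
  have "P = (\<Sum>\<alpha>\<in>keys P. Const (lookup P \<alpha>) * eval_monomial (\<lambda>x. Var (fst x) (snd x)) \<alpha>)"
    by (subst poly_mapping_sum_single) (simp add: eval_monomial_Var Const_def mult_single)
  also have "\<Phi> \<dots>"
    unfolding eval_monomial_def
    by (intro sum mult[OF Const] prod power Var) (use assms(1) in \<open>auto simp: vars_def\<close>)
  finally show ?thesis .
qed

lemma partial_deriv_subst:
  assumes "finite X" and "vars P \<subseteq> X"
  shows "partial_deriv y (subst \<tau> P) = (\<Sum>x\<in>X. subst \<tau> (partial_deriv x P) * partial_deriv y (\<tau> x))"
  using assms(2)
proof (induct P rule: poly_induct_vars)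
  case (Var a i)
  have "(\<Sum>x\<in>X. subst \<tau> (partial_deriv x (Var a i)) * partial_deriv y (\<tau> x)) =
        (\<Sum>x\<in>X. if x = (a, i) then partial_deriv y (\<tau> x) else 0)"
    by (rule sum.cong) (auto simp: partial_deriv_Var)
  then show ?case
    using Var assms(1) by simp
next
  case (add P Q)
  then show ?case by (simp add: subst_add partial_deriv_add distrib_right sum.distrib)
next
  case (mult P Q)
  then show ?case
    by (simp add: subst_mult partial_deriv_mult subst_add sum_distrib_left sum_distrib_right
        sum.distrib[symmetric] algebra_simps)
qed simp

section \<open>The Fischer inner product\<close>

definition mon_fact :: "monomial \<Rightarrow> real" where
  "mon_fact \<alpha> = (\<Prod>x\<in>keys \<alpha>. fact (lookup \<alpha> x))"

lemma mon_fact_mono_neutral: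
  "finite S \<Longrightarrow> keys \<alpha> \<subseteq> S \<Longrightarrow> mon_fact \<alpha> = (\<Prod>x\<in>S. fact (lookup \<alpha> x))"
  unfolding mon_fact_def by (intro prod.mono_neutral_left) (auto simp: in_keys_iff)

lemma mon_fact_minus_mvar:
  assumes "lookup \<alpha> x \<noteq> 0"
  shows "of_nat (lookup \<alpha> x) * mon_fact (\<alpha> - mvar x) = mon_fact \<alpha>"
proof -
  let ?R = "\<Prod>y\<in>keys \<alpha> - {x}. fact (lookup \<alpha> y)"
  have x: "x \<in> keys \<alpha>"
    using assms by (simp add: in_keys_iff)
  have "mon_fact (\<alpha> - mvar x) = (\<Prod>y\<in>keys \<alpha>. fact (lookup (\<alpha> - mvar x) y))"
    by (rule mon_fact_mono_neutral) (auto simp: keys_minus_mvar)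
  also have "\<dots> = fact (lookup (\<alpha> - mvar x) x) * (\<Prod>y\<in>keys \<alpha> - {x}. fact (lookup (\<alpha> - mvar x) y))"
    by (rule prod.remove[OF _ x]) simp
  also have "(\<Prod>y\<in>keys \<alpha> - {x}. fact (lookup (\<alpha> - mvar x) y)) = ?R"
    by (rule prod.cong) (auto simp: lookup_minus_mvar)
  also have "lookup (\<alpha> - mvar x) x = lookup \<alpha> x - 1"
    by (simp add: lookup_minus_mvar)
  finally have "mon_fact (\<alpha> - mvar x) = fact (lookup \<alpha> x - 1) * ?R" .
  moreover have "mon_fact \<alpha> = fact (lookup \<alpha> x) * ?R"
    unfolding mon_fact_def by (subst prod.remove[OF _ x]) auto
  ultimately show ?thesis
    using assms by (simp add: fact_reduce[of "lookup \<alpha> x"])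
qed

definition fischer_inner :: "cpoly \<Rightarrow> cpoly \<Rightarrow> complex" where
  "fischer_inner P Q = (\<Sum>\<alpha>\<in>keys P. lookup P \<alpha> * cnj (lookup Q \<alpha>) * of_real (mon_fact \<alpha>))"

lemma norm_sq_eq_fischer_inner: "norm_sq P = Re (fischer_inner P P)"
proof -
  have "fischer_inner P P =
        (\<Sum>\<alpha>\<in>keys P. of_real ((cmod (lookup P \<alpha>))\<^sup>2 * (\<Prod>x\<in>keys \<alpha>. fact (lookup \<alpha> x))))"
    unfolding fischer_inner_def mon_fact_def
    by (rule sum.cong) (auto simp: complex_mult_cnj cmod_power2)
  then show ?thesis
    by (simp only: norm_sq_def Re_sum Re_complex_of_real)
qed

lemma fischer_inner_mono_neutral:
  "finite S \<Longrightarrow> keys P \<subseteq> S \<Longrightarrow>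
   fischer_inner P Q = (\<Sum>\<alpha>\<in>S. lookup P \<alpha> * cnj (lookup Q \<alpha>) * of_real (mon_fact \<alpha>))"
  unfolding fischer_inner_def by (intro sum.mono_neutral_left) (auto simp: in_keys_iff)

lemma fischer_inner_add_left: "fischer_inner (P + P') Q = fischer_inner P Q + fischer_inner P' Q"
  by (subst (1 2 3) fischer_inner_mono_neutral[where S = "keys P \<union> keys P'"])
     (auto simp: keys_add lookup_add distrib_right sum.distrib)

lemma fischer_inner_add_right: "fischer_inner P (Q + Q') = fischer_inner P Q + fischer_inner P Q'"
  by (simp add: fischer_inner_def lookup_add distrib_left distrib_right sum.distrib)

lemma fischer_inner_0_left [simp]: "fischer_inner 0 Q = 0"
  by (simp add: fischer_inner_def)

lemma fischer_inner_0_right [simp]: "fischer_inner P 0 = 0"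
  by (simp add: fischer_inner_def)

lemma fischer_inner_sum_left: "fischer_inner (sum f A) Q = (\<Sum>i\<in>A. fischer_inner (f i) Q)"
  by (induct A rule: infinite_finite_induct) (simp_all add: fischer_inner_add_left)

lemma fischer_inner_sum_right: "fischer_inner P (sum f A) = (\<Sum>i\<in>A. fischer_inner P (f i))"
  by (induct A rule: infinite_finite_induct) (simp_all add: fischer_inner_add_right)

lemma fischer_inner_Const_mult_left: "fischer_inner (Const c * P) Q = c * fischer_inner P Q"
  by (subst fischer_inner_mono_neutral[where S = "keys P"])
     (simp_all add: keys_Const_mult lookup_Const_mult fischer_inner_def sum_distrib_left mult.assoc)

lemma fischer_inner_Const_mult_right: "fischer_inner P (Const c * Q) = cnj c * fischer_inner P Q"
  unfolding fischer_inner_def lookup_Const_mult sum_distrib_left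
  by (rule sum.cong) (simp_all add: mult.assoc mult.left_commute)

lemma fischer_inner_single:
  "fischer_inner (single \<alpha> a) (single \<beta> b) = (if \<alpha> = \<beta> then a * cnj b * of_real (mon_fact \<alpha>) else 0)"
  by (auto simp: fischer_inner_def lookup_single when_def)

lemma norm_sq_Const_mult: "norm_sq (Const c * P) = (cmod c)\<^sup>2 * norm_sq P"
proof -
  have "fischer_inner (Const c * P) (Const c * P) = (c * cnj c) * fischer_inner P P"
    by (simp add: fischer_inner_Const_mult_left fischer_inner_Const_mult_right mult.assoc)
  also have "c * cnj c = of_real ((cmod c)\<^sup>2)"
    by (rule complex_norm_square[symmetric])
  finally show ?thesis
    by (simp add: norm_sq_eq_fischer_inner)
qed

lemma norm_sq_nonneg: "0 \<le> norm_sq P"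
  unfolding norm_sq_def by (intro sum_nonneg mult_nonneg_nonneg prod_nonneg) auto

lemma fischer_inner_partial_deriv_single:
  assumes "finite X" "keys \<alpha> \<subseteq> X"
  shows "(\<Sum>x\<in>X. fischer_inner (partial_deriv x (single \<alpha> a)) (partial_deriv x (single \<beta> b))) =
         (if \<alpha> = \<beta> then of_nat (mon_degree \<alpha>) * a * cnj b * of_real (mon_fact \<alpha>) else 0)"
proof (cases "\<alpha> = \<beta>")
  case True
  have "fischer_inner (partial_deriv x (single \<alpha> a)) (partial_deriv x (single \<alpha> b)) =
        of_nat (lookup \<alpha> x) * (a * cnj b * of_real (mon_fact \<alpha>))" for x
    by (cases "lookup \<alpha> x = 0")
       (simp_all add: partial_deriv_single fischer_inner_single ac_simps
         flip: mon_fact_minus_mvar[of \<alpha> x])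
  moreover have "(\<Sum>x\<in>X. of_nat (lookup \<alpha> x)) = (of_nat (mon_degree \<alpha>) :: complex)"
    by (simp add: mon_degree_mono_neutral[OF assms])
  ultimately show ?thesis
    using True by (simp add: sum_distrib_right[symmetric])
next
  case False
  have "fischer_inner (partial_deriv x (single \<alpha> a)) (partial_deriv x (single \<beta> b)) = 0" for x
  proof (cases "lookup \<alpha> x = 0 \<or> lookup \<beta> x = 0")
    case nonzero: False
    then have "\<alpha> - mvar x \<noteq> \<beta> - mvar x"
      using False minus_mvar_plus_mvar[of \<alpha> x] minus_mvar_plus_mvar[of \<beta> x] by auto
    then show ?thesis
      by (simp add: partial_deriv_single fischer_inner_single)
  qed (auto simp: partial_deriv_single fischer_inner_single)
  then show ?thesis
    using False by simp
qed

lemma fischer_inner_euler: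
  assumes "finite X" "vars P \<subseteq> X" "homogeneous m P"
  shows "(\<Sum>x\<in>X. fischer_inner (partial_deriv x P) (partial_deriv x Q)) = of_nat m * fischer_inner P Q"
proof -
  let ?d = "\<lambda>x \<alpha> \<beta>. fischer_inner (partial_deriv x (single \<alpha> (lookup P \<alpha>)))
                                    (partial_deriv x (single \<beta> (lookup Q \<beta>)))"
  have "(\<Sum>x\<in>X. fischer_inner (partial_deriv x P) (partial_deriv x Q)) =
        (\<Sum>x\<in>X. \<Sum>\<alpha>\<in>keys P. \<Sum>\<beta>\<in>keys Q. ?d x \<alpha> \<beta>)"
    by (subst (1 2) partial_deriv_eq_sum_single)
       (simp only: fischer_inner_sum_left, simp only: fischer_inner_sum_right)
  also have "\<dots> = (\<Sum>\<alpha>\<in>keys P. \<Sum>x\<in>X. \<Sum>\<beta>\<in>keys Q. ?d x \<alpha> \<beta>)"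
    by (rule sum.swap)
  also have "\<dots> = (\<Sum>\<alpha>\<in>keys P. \<Sum>\<beta>\<in>keys Q. \<Sum>x\<in>X. ?d x \<alpha> \<beta>)"
    by (rule sum.cong[OF refl], rule sum.swap)
  also have "\<dots> = (\<Sum>\<alpha>\<in>keys P. \<Sum>\<beta>\<in>keys Q.
      if \<alpha> = \<beta> then of_nat m * (lookup P \<alpha> * cnj (lookup Q \<alpha>) * of_real (mon_fact \<alpha>)) else 0)"
  proof (intro sum.cong refl)
    fix \<alpha> \<beta> assume \<alpha>: "\<alpha> \<in> keys P"
    then have "keys \<alpha> \<subseteq> X" "mon_degree \<alpha> = m"
      using assms(2,3) by (auto simp: vars_def homogeneous_def)
    then show "(\<Sum>x\<in>X. fischer_inner (partial_deriv x (single \<alpha> (lookup P \<alpha>)))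
                                     (partial_deriv x (single \<beta> (lookup Q \<beta>)))) =
      (if \<alpha> = \<beta> then of_nat m * (lookup P \<alpha> * cnj (lookup Q \<alpha>) * of_real (mon_fact \<alpha>)) else 0)"
      by (cases "\<alpha> = \<beta>") (simp_all add: fischer_inner_partial_deriv_single[OF assms(1)] ac_simps)
  qed
  also have "\<dots> = (\<Sum>\<alpha>\<in>keys P. of_nat m * (lookup P \<alpha> * cnj (lookup Q \<alpha>) * of_real (mon_fact \<alpha>)))"
    by (rule sum.cong) (auto simp: in_keys_iff)
  also have "\<dots> = of_nat m * fischer_inner P Q"
    by (simp add: fischer_inner_def sum_distrib_left)
  finally show ?thesis .
qed

definition linear_form :: "(nat \<times> nat) set \<Rightarrow> (nat \<times> nat \<Rightarrow> complex) \<Rightarrow> cpoly" where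
  "linear_form X u = (\<Sum>y\<in>X. Const (u y) * Var (fst y) (snd y))"

lemma vars_linear_form: "vars (linear_form X u) \<subseteq> X"
  unfolding linear_form_def
  by (intro vars_sum order.trans[OF vars_Const_mult]) (auto simp: vars_Var)

lemma homogeneous_linear_form: "homogeneous 1 (linear_form X u)"
  unfolding linear_form_def by (intro homogeneous_sum homogeneous_Const_mult homogeneous_Var)

lemma partial_deriv_linear_form:
  assumes "finite X" and "y \<in> X"
  shows "partial_deriv y (linear_form X u) = Const (u y)"
proof -
  have "partial_deriv y (linear_form X u) = (\<Sum>y'\<in>X. if y' = y then Const (u y') else 0)"
    unfolding linear_form_def partial_deriv_sum
    by (rule sum.cong) (auto simp: partial_deriv_Const_mult partial_deriv_Var)
  then show ?thesis
    using assms by simp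
qed

lemma partial_deriv_subst_linear:
  assumes "finite X" and "\<And>x. x \<in> X \<Longrightarrow> \<tau> x = linear_form X (\<lambda>y. U y x)"
    and "vars R \<subseteq> X" and "y \<in> X"
  shows "partial_deriv y (subst \<tau> R) = (\<Sum>x\<in>X. Const (U y x) * subst \<tau> (partial_deriv x R))"
  unfolding partial_deriv_subst[OF assms(1,3)]
  by (rule sum.cong) (simp_all add: assms partial_deriv_linear_form mult.commute)

lemma fischer_inner_unitary_sum:
  assumes "finite X"
    and orth: "\<And>x x'. x \<in> X \<Longrightarrow> x' \<in> X \<Longrightarrow> (\<Sum>y\<in>X. U y x * cnj (U y x')) = (if x = x' then 1 else 0)"
  shows "(\<Sum>y\<in>X. fischer_inner (\<Sum>x\<in>X. Const (U y x) * A x) (\<Sum>x\<in>X. Const (U y x) * B x)) =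
         (\<Sum>x\<in>X. fischer_inner (A x) (B x))"
proof -
  have "(\<Sum>y\<in>X. fischer_inner (\<Sum>x\<in>X. Const (U y x) * A x) (\<Sum>x\<in>X. Const (U y x) * B x)) =
        (\<Sum>y\<in>X. \<Sum>x\<in>X. \<Sum>x'\<in>X. U y x * (cnj (U y x') * fischer_inner (A x) (B x')))"
    by (simp only: fischer_inner_sum_left fischer_inner_Const_mult_left,
        simp only: fischer_inner_sum_right fischer_inner_Const_mult_right sum_distrib_left)
  also have "\<dots> = (\<Sum>x\<in>X. \<Sum>x'\<in>X. \<Sum>y\<in>X. U y x * cnj (U y x') * fischer_inner (A x) (B x'))"
    by (subst sum.swap, rule sum.cong[OF refl], subst sum.swap) (simp add: mult.assoc)
  also have "\<dots> = (\<Sum>x\<in>X. \<Sum>x'\<in>X. (\<Sum>y\<in>X. U y x * cnj (U y x')) * fischer_inner (A x) (B x'))"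
    by (simp add: sum_distrib_right)
  also have "\<dots> = (\<Sum>x\<in>X. \<Sum>x'\<in>X. if x = x' then fischer_inner (A x) (B x') else 0)"
    by (intro sum.cong refl) (simp add: orth)
  also have "\<dots> = (\<Sum>x\<in>X. fischer_inner (A x) (B x))"
    using assms(1) by simp
  finally show ?thesis .
qed

lemma fischer_inner_subst_unitary:
  assumes fin: "finite X"
    and \<tau>: "\<And>x. x \<in> X \<Longrightarrow> \<tau> x = linear_form X (\<lambda>y. U y x)"
    and orth: "\<And>x x'. x \<in> X \<Longrightarrow> x' \<in> X \<Longrightarrow> (\<Sum>y\<in>X. U y x * cnj (U y x')) = (if x = x' then 1 else 0)"
  shows "homogeneous m P \<Longrightarrow> homogeneous m Q \<Longrightarrow> vars P \<subseteq> X \<Longrightarrow> vars Q \<subseteq> X \<Longrightarrow>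
         fischer_inner (subst \<tau> P) (subst \<tau> Q) = fischer_inner P Q"
proof (induct m arbitrary: P Q)
  case 0
  then show ?case
    by (metis homogeneous_0_eq_Const subst_Const)
next
  case (Suc m P Q)
  have vars_subst_\<tau>: "vars R \<subseteq> X \<Longrightarrow> vars (subst \<tau> R) \<subseteq> X" for R
    by (intro vars_subst) (metis \<tau> subsetD vars_linear_form)
  have homogeneous_subst_\<tau>: "homogeneous (Suc m) R \<Longrightarrow> vars R \<subseteq> X \<Longrightarrow> homogeneous (Suc m) (subst \<tau> R)" for R
    by (rule homogeneous_subst) (use \<tau> homogeneous_linear_form in auto)
  have IH: "fischer_inner (subst \<tau> (partial_deriv x P)) (subst \<tau> (partial_deriv x Q)) =
            fischer_inner (partial_deriv x P) (partial_deriv x Q)" for x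
    using Suc vars_partial_deriv homogeneous_partial_deriv by (meson order.trans)
  have "of_nat (Suc m) * fischer_inner (subst \<tau> P) (subst \<tau> Q) =
        (\<Sum>y\<in>X. fischer_inner (partial_deriv y (subst \<tau> P)) (partial_deriv y (subst \<tau> Q)))"
    using Suc by (intro fischer_inner_euler[symmetric] fin vars_subst_\<tau> homogeneous_subst_\<tau>)
  also have "\<dots> = (\<Sum>x\<in>X. fischer_inner (subst \<tau> (partial_deriv x P)) (subst \<tau> (partial_deriv x Q)))"
    using Suc.prems(3,4)
    by (simp add: partial_deriv_subst_linear[OF fin \<tau>] fischer_inner_unitary_sum[OF fin orth] cong: sum.cong)
  also have "\<dots> = of_nat (Suc m) * fischer_inner P Q"
    unfolding IH using Suc.prems by (intro fischer_inner_euler fin)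
  finally show ?case
    by (simp only: mult_cancel_left of_nat_eq_0_iff) simp
qed

section \<open>Determinants and the QR decomposition\<close>

lemma ldet_eq_det: "ldet p M = det (mat p p (\<lambda>(i, j). M i j))"
  unfolding ldet_def det_def
  by (auto simp: atLeast0LessThan permutes_in_image intro!: sum.cong prod.cong arg_cong2[where f = "(*)"])

lemma ldet_cong: "(\<And>a b. a < p \<Longrightarrow> b < p \<Longrightarrow> M a b = M' a b) \<Longrightarrow> ldet p M = ldet p M'"
  unfolding ldet_def
  by (auto simp: permutes_in_image intro!: sum.cong prod.cong arg_cong2[where f = "(*)"])

lemma ldet_mult:
  fixes A B :: "nat \<Rightarrow> nat \<Rightarrow> 'r::comm_ring_1"
  shows "ldet p (\<lambda>a b. \<Sum>k<p. A a k * B k b) = ldet p A * ldet p B"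
proof -
  have "mat p p (\<lambda>(i, j). \<Sum>k<p. A i k * B k j) = mat p p (\<lambda>(i, j). A i j) * mat p p (\<lambda>(i, j). B i j)"
    by (rule eq_matI) (auto simp: scalar_prod_def atLeast0LessThan intro!: sum.cong)
  then show ?thesis
    unfolding ldet_eq_det by (simp add: det_mult[of _ p])
qed

lemma ldet_transpose: "ldet p (\<lambda>a b. M b a) = ldet p M"
proof -
  have "mat p p (\<lambda>(i, j). M j i) = transpose_mat (mat p p (\<lambda>(i, j). M i j))"
    by (rule eq_matI) auto
  then show ?thesis
    unfolding ldet_eq_det by (simp add: det_transpose[of _ p])
qed

lemma ldet_cnj: "ldet p (\<lambda>a b. cnj (M a b)) = cnj (ldet p M)"
  unfolding ldet_def by (simp add: cnj_sum cnj_prod)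

lemma ldet_Const: "ldet p (\<lambda>a b. Const (M a b)) = Const (ldet p M)"
  unfolding ldet_def by (simp add: Const_sum Const_mult Const_prod Const_of_int)

lemma ldet_nonzero_kernel:
  fixes g :: "nat \<Rightarrow> nat \<Rightarrow> complex"
  assumes "ldet n g \<noteq> 0" and "\<forall>i<n. (\<Sum>l<n. g i l * x l) = 0" and "l < n"
  shows "x l = 0"
proof -
  let ?A = "mat n n (\<lambda>(i, j). g i j)"
  have "?A *\<^sub>v vec n x = 0\<^sub>v n"
    using assms(2) by (intro eq_vecI) (auto simp: scalar_prod_def atLeast0LessThan)
  moreover have "det ?A \<noteq> 0"
    using assms(1) by (simp add: ldet_eq_det)
  ultimately have "vec n x = 0\<^sub>v n"
    using det_0_iff_vec_prod_zero[OF mat_carrier, of n "\<lambda>(i, j). g i j"] vec_carrier by blast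
  then show ?thesis
    using assms(3) by (metis index_vec index_zero_vec(1))
qed

definition cinner :: "nat \<Rightarrow> (nat \<Rightarrow> complex) \<Rightarrow> (nat \<Rightarrow> complex) \<Rightarrow> complex" where
  "cinner n u w = (\<Sum>i<n. u i * cnj (w i))"

lemma cinner_commute: "cinner n u w = cnj (cinner n w u)"
  by (simp add: cinner_def cnj_sum mult.commute)

lemma cinner_divide_left: "cinner n (\<lambda>i. u i / a) w = cinner n u w / a"
  by (simp add: cinner_def sum_divide_distrib)

lemma cinner_divide_right: "cinner n u (\<lambda>i. w i / a) = cinner n u w / cnj a"
  by (simp add: cinner_def sum_divide_distrib)

lemma cinner_self: "cinner n u u = of_real (\<Sum>i<n. (cmod (u i))\<^sup>2)"
  by (simp only: cinner_def of_real_sum complex_norm_square)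

lemma cinner_diff_sum_left:
  "cinner n (\<lambda>i. u i - (\<Sum>k<m. c k * w k i)) z = cinner n u z - (\<Sum>k<m. c k * cinner n (w k) z)"
  by (simp add: cinner_def left_diff_distrib sum_subtractf sum_distrib_left sum_distrib_right
      mult.assoc sum.swap[of _ "{..<n}"])

text \<open>The columns \<open>q 0, \<dots>, q (m - 1)\<close> of an \<open>n \<times> m\<close> matrix, \<open>q k i\<close> being the entry in row \<open>i\<close>.\<close>
definition orthonormal :: "nat \<Rightarrow> nat \<Rightarrow> (nat \<Rightarrow> nat \<Rightarrow> complex) \<Rightarrow> bool" where
  "orthonormal n m q \<longleftrightarrow> (\<forall>k<m. \<forall>k'<m. cinner n (q k) (q k') = (if k = k' then 1 else 0))"

definition upper_triangular :: "nat \<Rightarrow> (nat \<Rightarrow> nat \<Rightarrow> complex) \<Rightarrow> bool" where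
  "upper_triangular m R \<longleftrightarrow> (\<forall>j<m. \<forall>k. j < k \<longrightarrow> R k j = 0)"

lemma upper_triangular_zero: "upper_triangular m R \<Longrightarrow> j < m \<Longrightarrow> j < k \<Longrightarrow> R k j = 0"
  by (simp add: upper_triangular_def)

definition in_col_span :: "nat \<Rightarrow> nat \<Rightarrow> (nat \<Rightarrow> nat \<Rightarrow> complex) \<Rightarrow> (nat \<Rightarrow> complex) \<Rightarrow> bool" where
  "in_col_span n m g u \<longleftrightarrow> (\<exists>x. \<forall>i<n. u i = (\<Sum>l<m. x l * g i l))"

lemma in_col_span_column: "l < m \<Longrightarrow> in_col_span n m g (\<lambda>i. g i l)"
  unfolding in_col_span_def
  by (rule exI[of _ "\<lambda>l'. of_bool (l' = l)"]) simp

lemma in_col_span_mono: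
  assumes "in_col_span n m g u" and "m \<le> m'"
  shows "in_col_span n m' g u"
proof -
  obtain x where x: "\<forall>i<n. u i = (\<Sum>l<m. x l * g i l)"
    using assms(1) by (auto simp: in_col_span_def)
  have "(\<Sum>l<m. x l * g i l) = (\<Sum>l<m'. (if l < m then x l else 0) * g i l)" for i
    using assms(2) by (intro sum.mono_neutral_cong_left) auto
  then show ?thesis
    using x unfolding in_col_span_def by (intro exI[of _ "\<lambda>l. if l < m then x l else 0"]) simp
qed

lemma in_col_span_add_scale:
  assumes "in_col_span n m g u" and "in_col_span n m g w"
  shows "in_col_span n m g (\<lambda>i. a * u i + b * w i)"
proof -
  obtain x y where "\<forall>i<n. u i = (\<Sum>l<m. x l * g i l)" and "\<forall>i<n. w i = (\<Sum>l<m. y l * g i l)"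
    using assms by (auto simp: in_col_span_def)
  then show ?thesis
    unfolding in_col_span_def
    by (auto intro!: exI[of _ "\<lambda>l. a * x l + b * y l"] simp: sum_distrib_left sum.distrib algebra_simps)
qed

lemma in_col_span_sum:
  fixes p :: nat
  shows "(\<And>k. k < p \<Longrightarrow> in_col_span n m g (u k)) \<Longrightarrow> in_col_span n m g (\<lambda>i. \<Sum>k<p. c k * u k i)"
proof (induct p)
  case 0
  then show ?case
    unfolding in_col_span_def by (auto intro!: exI[of _ "\<lambda>_. 0"])
next
  case (Suc p)
  then show ?case
    using in_col_span_add_scale[of n m g "\<lambda>i. \<Sum>k<p. c k * u k i" "u p" 1 "c p"] by simp
qed

lemma column_notin_col_span:
  assumes "ldet n g \<noteq> 0" and "m < n" and "in_col_span n m g u"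
  shows "\<exists>i<n. g i m - u i \<noteq> 0"
proof (rule ccontr)
  assume zero: "\<not> (\<exists>i<n. g i m - u i \<noteq> 0)"
  obtain x where x: "\<forall>i<n. u i = (\<Sum>l<m. x l * g i l)"
    using assms(3) by (auto simp: in_col_span_def)
  define y where "y l = (if l = m then 1 else if l < m then - x l else 0)" for l
  have "(\<Sum>l<n. g i l * y l) = g i m - u i" if "i < n" for i
  proof -
    have "(\<Sum>l<n. g i l * y l) = (\<Sum>l\<in>insert m {..<m}. g i l * y l)"
      using assms(2) by (intro sum.mono_neutral_right) (auto simp: y_def)
    then show ?thesis
      using x that by (simp add: y_def sum_negf mult.commute)
  qed
  then have "y m = 0"
    using zero assms(1,2) by (intro ldet_nonzero_kernel[of n g]) auto
  then show False
    by (simp add: y_def)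
qed

lemma cinner_residual_orthogonal:
  assumes "orthonormal n m q" and "k < m"
  shows "cinner n (\<lambda>i. w i - (\<Sum>k'<m. cinner n w (q k') * q k' i)) (q k) = 0"
proof -
  have "(\<Sum>k'<m. cinner n w (q k') * cinner n (q k') (q k)) = cinner n w (q k)"
    using assms by (simp add: orthonormal_def of_bool_def[symmetric])
  then show ?thesis
    by (simp add: cinner_diff_sum_left)
qed

lemma orthonormal_extend:
  assumes "orthonormal n m q" and "\<forall>k<m. cinner n v (q k) = 0"
    and "N > 0" and "cinner n v v = of_real (N\<^sup>2)"
  shows "orthonormal n (Suc m) (q(m := \<lambda>i. v i / of_real N))"
proof -
  have "cinner n (q k) v = 0" if "k < m" for k
    using that assms(2) cinner_commute[of n "q k" v] by simp
  then show ?thesis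
    using assms by (auto simp: orthonormal_def less_Suc_eq cinner_divide_left cinner_divide_right
        power2_eq_square)
qed

lemma gram_schmidt:
  fixes g :: "nat \<Rightarrow> nat \<Rightarrow> complex"
  assumes "ldet n g \<noteq> 0"
  shows "m \<le> n \<Longrightarrow> \<exists>q R. orthonormal n m q \<and> upper_triangular m R \<and>
           (\<forall>j<m. \<forall>i<n. g i j = (\<Sum>k<m. R k j * q k i)) \<and> (\<forall>k<m. in_col_span n m g (q k))"
proof (induct m)
  case 0
  show ?case
    by (auto simp: orthonormal_def upper_triangular_def)
next
  case (Suc m)
  then have "m < n"
    by simp
  from Suc obtain q R where orth: "orthonormal n m q" and tri: "upper_triangular m R"
    and fac: "\<forall>j<m. \<forall>i<n. g i j = (\<Sum>k<m. R k j * q k i)" and span: "\<forall>k<m. in_col_span n m g (q k)"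
    by auto
  define c where "c k = cinner n (\<lambda>i. g i m) (q k)" for k
  define u where "u i = (\<Sum>k<m. c k * q k i)" for i
  define v where "v i = g i m - u i" for i
  define N where "N = sqrt (\<Sum>i<n. (cmod (v i))\<^sup>2)"
  have span_u: "in_col_span n m g u"
    unfolding u_def by (rule in_col_span_sum) (use span in auto)
  then obtain i0 where "i0 < n" "v i0 \<noteq> 0"
    using column_notin_col_span[OF assms \<open>m < n\<close>] by (auto simp: v_def)
  then have N: "N > 0"
    unfolding N_def by (intro real_sqrt_gt_zero sum_pos2[of _ i0]) auto
  have vv: "cinner n v v = of_real (N\<^sup>2)"
    by (simp add: cinner_self N_def sum_nonneg)
  have vq: "\<forall>k<m. cinner n v (q k) = 0"
    using cinner_residual_orthogonal[OF orth] by (simp add: v_def[abs_def] u_def c_def)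
  define q' where "q' = q(m := \<lambda>i. v i / of_real N)"
  define R' where "R' k j = (if j = m then (if k < m then c k else if k = m then of_real N else 0)
                            else R k j)" for k j
  have "orthonormal n (Suc m) q'"
    unfolding q'_def by (rule orthonormal_extend[OF orth vq N vv])
  moreover have "upper_triangular (Suc m) R'"
    using tri by (auto simp: upper_triangular_def R'_def)
  moreover have "g i j = (\<Sum>k<Suc m. R' k j * q' k i)" if "j < Suc m" "i < n" for i j
  proof (cases "j = m")
    case True
    then show ?thesis
      using N by (simp add: R'_def q'_def v_def u_def)
  next
    case False
    then have "j < m"
      using that by simp
    then show ?thesis
      using fac tri that by (simp add: R'_def q'_def upper_triangular_def)
  qed
  moreover have "in_col_span n (Suc m) g (q' k)" if "k < Suc m" for k
  proof (cases "k = m")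
    case True
    have "in_col_span n (Suc m) g (\<lambda>i. (1 / of_real N) * g i m + (- 1 / of_real N) * u i)"
      by (intro in_col_span_add_scale in_col_span_column in_col_span_mono[OF span_u]) auto
    then show ?thesis
      using True by (simp add: q'_def v_def diff_divide_distrib)
  next
    case False
    then have "in_col_span n m g (q k)"
      using span that by simp
    then show ?thesis
      using False by (simp add: q'_def in_col_span_mono)
  qed
  ultimately show ?case
    by blast
qed

lemma qr_decomposition:
  fixes g :: "nat \<Rightarrow> nat \<Rightarrow> complex"
  assumes "ldet n g \<noteq> 0"
  obtains q R where "orthonormal n n q" and "upper_triangular n R"
    and "\<forall>j<n. \<forall>i<n. g i j = (\<Sum>k<n. R k j * q k i)"
  using gram_schmidt[OF assms order.refl] by blast

section \<open>The highest weight vector\<close>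

lemma colh_le_length: "colh lam l \<le> length lam"
  unfolding colh_def by (rule order.trans[OF card_mono[of "{..<length lam}"]]) auto

lemma homogeneous_ldet_Var: "homogeneous p (ldet p (\<lambda>a b. Var a b))"
  unfolding ldet_def
proof (rule homogeneous_sum)
  fix \<sigma>
  have "homogeneous (\<Sum>a<p. 1) (\<Prod>a<p. Var a (\<sigma> a))"
    by (intro homogeneous_prod homogeneous_Var)
  then show "homogeneous p (of_int (sign \<sigma>) * (\<Prod>a<p. Var a (\<sigma> a)))"
    using homogeneous_Const_mult[of p _ "of_int (sign \<sigma>)"] by (simp add: Const_of_int)
qed

lemma vars_ldet_Var:
  assumes "p \<le> n"
  shows "vars (ldet p (\<lambda>a b. Var a b)) \<subseteq> {..<n} \<times> {..<n}"
  unfolding ldet_def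
proof (intro vars_sum order.trans[OF vars_mult] Un_least vars_prod)
  fix \<sigma> a assume "\<sigma> \<in> {\<sigma>. \<sigma> permutes {0..<p}}" and a: "a \<in> {..<p}"
  then have "\<sigma> a \<in> {0..<p}"
    using permutes_in_image[of \<sigma> "{0..<p}" a] by simp
  then have "a < n" "\<sigma> a < n"
    using assms a by auto
  then show "vars (Var a (\<sigma> a)) \<subseteq> {..<n} \<times> {..<n}"
    by (simp add: vars_Var)
qed (simp add: Const_of_int[symmetric])

lemma homogeneous_e_U: "homogeneous (\<Sum>l\<in>{1..ncols lam}. colh lam l) (e_U lam)"
  unfolding e_U_def by (intro homogeneous_prod homogeneous_ldet_Var)

lemma vars_e_U: "length lam \<le> n \<Longrightarrow> vars (e_U lam) \<subseteq> {..<n} \<times> {..<n}"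
  unfolding e_U_def
  by (intro vars_prod vars_ldet_Var order.trans[OF colh_le_length])

text \<open>\<open>\<pi>(Q)\<close> substitutes \<open>z\<^sub>a\<^sub>,\<^sub>j \<mapsto> \<Sum>\<^sub>i z\<^sub>a\<^sub>,\<^sub>i Q\<^sub>i\<^sub>,\<^sub>j\<close>; on the variable space this is the linear map
  with matrix \<open>right_mult_matrix q\<close>, where \<open>q j\<close> is the \<open>j\<close>-th column of \<open>Q\<close>.\<close>
definition right_mult_matrix :: "(nat \<Rightarrow> nat \<Rightarrow> complex) \<Rightarrow> nat \<times> nat \<Rightarrow> nat \<times> nat \<Rightarrow> complex" where
  "right_mult_matrix q y x = (if fst y = fst x then q (snd x) (snd y) else 0)"

lemma right_mult_matrix_linear_form:
  assumes "x \<in> {..<n} \<times> {..<n}"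
  shows "(case x of (a, j) \<Rightarrow> \<Sum>i<n. Var a i * Const (q j i)) =
         linear_form ({..<n} \<times> {..<n}) (\<lambda>y. right_mult_matrix q y x)"
proof -
  obtain a j where x: "x = (a, j)" and "a < n"
    using assms by auto
  have "linear_form ({..<n} \<times> {..<n}) (\<lambda>y. right_mult_matrix q y x) =
        (\<Sum>a'<n. \<Sum>i<n. Const (right_mult_matrix q (a', i) x) * Var a' i)"
    by (simp add: linear_form_def sum.cartesian_product split_def)
  also have "\<dots> = (\<Sum>a'<n. if a' = a then (\<Sum>i<n. Const (q j i) * Var a i) else 0)"
    by (rule sum.cong) (auto simp: right_mult_matrix_def x)
  also have "\<dots> = (\<Sum>i<n. Const (q j i) * Var a i)"
    using \<open>a < n\<close> by simp
  finally show ?thesis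
    by (simp add: x mult.commute)
qed

lemma right_mult_matrix_orthonormal:
  assumes "orthonormal n n q" and "x \<in> {..<n} \<times> {..<n}" and "x' \<in> {..<n} \<times> {..<n}"
  shows "(\<Sum>y\<in>{..<n} \<times> {..<n}. right_mult_matrix q y x * cnj (right_mult_matrix q y x')) =
         (if x = x' then 1 else 0)"
proof -
  obtain a j a' j' where x: "x = (a, j)" "a < n" "j < n" and x': "x' = (a', j')" "j' < n"
    using assms(2,3) by auto
  have "(\<Sum>y\<in>{..<n} \<times> {..<n}. right_mult_matrix q y x * cnj (right_mult_matrix q y x')) =
        (\<Sum>a''<n. \<Sum>i<n. right_mult_matrix q (a'', i) x * cnj (right_mult_matrix q (a'', i) x'))"
    by (simp add: sum.cartesian_product split_def)
  also have "\<dots> = (\<Sum>a''<n. if a'' = a \<and> a'' = a' then cinner n (q j) (q j') else 0)"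
    by (rule sum.cong) (auto simp: right_mult_matrix_def x x' cinner_def intro!: sum.neutral)
  also have "\<dots> = (if a = a' then cinner n (q j) (q j') else 0)"
    using x(2) by (auto intro!: sum.neutral)
  finally show ?thesis
    using assms(1) x x' by (auto simp: orthonormal_def)
qed

lemma norm_sq_pi_act_unitary:
  assumes "orthonormal n n q" and "homogeneous m P" and "vars P \<subseteq> {..<n} \<times> {..<n}"
  shows "norm_sq (pi_act n (\<lambda>i j. q j i) P) = norm_sq P"
proof -
  have "fischer_inner (pi_act n (\<lambda>i j. q j i) P) (pi_act n (\<lambda>i j. q j i) P) = fischer_inner P P"
    unfolding pi_act_def
    by (rule fischer_inner_subst_unitary[where U = "right_mult_matrix q"])
       (use assms right_mult_matrix_linear_form right_mult_matrix_orthonormal in auto)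
  then show ?thesis
    by (simp add: norm_sq_eq_fischer_inner)
qed

text \<open>Since \<open>R\<close> is upper triangular, the first \<open>p\<close> columns of \<open>Q R\<close> only involve the
  first \<open>p\<close> columns of \<open>Q\<close> and the leading \<open>p \<times> p\<close> block of \<open>R\<close>.\<close>
lemma ldet_Z_qr:
  assumes "p \<le> n" and "upper_triangular n R"
    and fac: "\<forall>j<n. \<forall>i<n. g i j = (\<Sum>k<n. R k j * q k i)"
  shows "ldet p (\<lambda>a b. \<Sum>i<n. Var a i * Const (g i b)) =
         ldet p (\<lambda>a b. \<Sum>i<n. Var a i * Const (q b i)) * Const (ldet p R)"
proof -
  have g: "g i b = (\<Sum>k<p. R k b * q k i)" if "i < n" "b < p" for i b
  proof -
    have "g i b = (\<Sum>k<n. R k b * q k i)"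
      using fac assms(1) that by simp
    also have "\<dots> = (\<Sum>k<p. R k b * q k i)"
      using assms(1,2) that by (intro sum.mono_neutral_right) (auto simp: upper_triangular_zero)
    finally show ?thesis .
  qed
  have "ldet p (\<lambda>a b. \<Sum>i<n. Var a i * Const (g i b)) =
        ldet p (\<lambda>a b. \<Sum>k<p. (\<Sum>i<n. Var a i * Const (q k i)) * Const (R k b))"
  proof (rule ldet_cong)
    fix a b assume "b < p"
    then have "(\<Sum>i<n. Var a i * Const (g i b)) = (\<Sum>i<n. \<Sum>k<p. Var a i * Const (q k i) * Const (R k b))"
      by (intro sum.cong refl) (simp add: g Const_sum sum_distrib_left Const_mult ac_simps)
    also have "\<dots> = (\<Sum>k<p. (\<Sum>i<n. Var a i * Const (q k i)) * Const (R k b))"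
      by (subst sum.swap) (simp add: sum_distrib_right)
    finally show "(\<Sum>i<n. Var a i * Const (g i b)) = (\<Sum>k<p. (\<Sum>i<n. Var a i * Const (q k i)) * Const (R k b))" .
  qed
  also have "\<dots> = ldet p (\<lambda>a b. \<Sum>i<n. Var a i * Const (q b i)) * Const (ldet p R)"
    by (simp add: ldet_mult ldet_Const)
  finally show ?thesis .
qed

lemma pi_act_e_U_qr:
  assumes "length lam \<le> n" and "upper_triangular n R"
    and "\<forall>j<n. \<forall>i<n. g i j = (\<Sum>k<n. R k j * q k i)"
  shows "pi_act n g (e_U lam) =
         Const (\<Prod>l\<in>{1..ncols lam}. ldet (colh lam l) R) * pi_act n (\<lambda>i j. q j i) (e_U lam)"
proof -
  have "colh lam l \<le> n" for l
    using colh_le_length[of lam l] assms(1) by linarith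
  then show ?thesis
    unfolding pi_act_def e_U_def subst_prod subst_ldet
    by (simp add: ldet_Z_qr[OF _ assms(2,3)] prod.distrib Const_prod mult.commute)
qed

lemma gstar_g_qr:
  assumes "orthonormal n n q" and "upper_triangular n R"
    and fac: "\<forall>j<n. \<forall>i<n. g i j = (\<Sum>k<n. R k j * q k i)"
    and "p \<le> n" and "i < p" and "j < p"
  shows "gstar_g n g i j = (\<Sum>a<p. cnj (R a i) * R a j)"
proof -
  let ?t = "\<lambda>a b k. cnj (R a i) * R b j * (q b k * cnj (q a k))"
  have "gstar_g n g i j = (\<Sum>k<n. (\<Sum>a<n. cnj (R a i) * cnj (q a k)) * (\<Sum>b<n. R b j * q b k))"
    unfolding gstar_g_def using fac assms(4-6) by (intro sum.cong refl) (simp add: cnj_sum)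
  also have "\<dots> = (\<Sum>k<n. \<Sum>a<n. \<Sum>b<n. ?t a b k)"
    unfolding sum_product by (intro sum.cong refl) (simp add: ac_simps)
  also have "\<dots> = (\<Sum>a<n. \<Sum>b<n. \<Sum>k<n. ?t a b k)"
    by (subst sum.swap, rule sum.cong[OF refl], rule sum.swap)
  also have "\<dots> = (\<Sum>a<n. \<Sum>b<n. cnj (R a i) * R b j * cinner n (q b) (q a))"
    by (simp add: cinner_def sum_distrib_left)
  also have "\<dots> = (\<Sum>a<n. cnj (R a i) * R a j)"
    using assms(1) by (simp add: orthonormal_def of_bool_def[symmetric])
  also have "\<dots> = (\<Sum>a<p. cnj (R a i) * R a j)"
    using assms(2,4-6) by (intro sum.mono_neutral_right) (auto simp: upper_triangular_zero)
  finally show ?thesis .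
qed

lemma lead_minor_gstar_g_qr:
  assumes "orthonormal n n q" and "upper_triangular n R"
    and "\<forall>j<n. \<forall>i<n. g i j = (\<Sum>k<n. R k j * q k i)" and "p \<le> n"
  shows "lead_minor p (gstar_g n g) = cnj (ldet p R) * ldet p R"
proof -
  have "lead_minor p (gstar_g n g) = ldet p (\<lambda>i j. \<Sum>a<p. cnj (R a i) * R a j)"
    unfolding lead_minor_def by (rule ldet_cong) (rule gstar_g_qr[OF assms])
  also have "\<dots> = ldet p (\<lambda>i a. cnj (R a i)) * ldet p R"
    by (rule ldet_mult)
  also have "ldet p (\<lambda>i a. cnj (R a i)) = cnj (ldet p R)"
    using ldet_cnj[of p "\<lambda>i a. R a i"] ldet_transpose[of p R] by simp
  finally show ?thesis .
qed

theorem mainTheorem2: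
  fixes K :: "complex set" and n :: nat and lam :: "nat list"
    and g :: "nat \<Rightarrow> nat \<Rightarrow> complex"
  assumes "is_number_field K"
    and "is_partition lam" and "length lam \<le> n"
    and "\<forall>i<n. \<forall>j<n. g i j \<in> K"
    and "ldet n g \<noteq> 0"
  shows "H_v n lam (place_degree K) (pi_act n g (e_U lam))
         = (Re (\<Prod>l\<in>{1..ncols lam}. lead_minor (colh lam l) (gstar_g n g)))
             powr (real (place_degree K) / 2)
           * H_v n lam (place_degree K) (e_U lam)"
proof -
  obtain q R where q: "orthonormal n n q" and R: "upper_triangular n R"
    and fac: "\<forall>j<n. \<forall>i<n. g i j = (\<Sum>k<n. R k j * q k i)"
    using qr_decomposition[OF assms(5)] by blast
  have colh_le: "colh lam l \<le> n" for l
    using colh_le_length[of lam l] assms(3) by linarith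
  define C where "C = (\<Prod>l\<in>{1..ncols lam}. ldet (colh lam l) R)"
  have "norm_sq (pi_act n g (e_U lam)) = (cmod C)\<^sup>2 * norm_sq (e_U lam)"
    unfolding pi_act_e_U_qr[OF assms(3) R fac] norm_sq_Const_mult C_def
    using norm_sq_pi_act_unitary[OF q homogeneous_e_U vars_e_U[OF assms(3)]] by simp
  moreover have "(\<Prod>l\<in>{1..ncols lam}. lead_minor (colh lam l) (gstar_g n g)) = C * cnj C"
    by (simp add: lead_minor_gstar_g_qr[OF q R fac colh_le] C_def prod.distrib cnj_prod mult.commute)
  then have "Re (\<Prod>l\<in>{1..ncols lam}. lead_minor (colh lam l) (gstar_g n g)) = (cmod C)\<^sup>2"
    by (simp flip: complex_norm_square)
  ultimately show ?thesis
    unfolding H_v_def by (simp add: powr_mult norm_sq_nonneg)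
qed

end
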